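(* Let $R$ be a unital associative ring and $$A=\begin{pmatrix}1&1&1\\1&a&b\\1&c&d\end{pmatrix}\in\widehat{\cal S},\quad \Phi(A)=\begin{pmatrix}1&1&1\\1&a'&b'\\1&c'&d'\end{pmatrix},\quad \Phi^{-1}(A)=\begin{pmatrix}1&1&1\\1&a^\circ&b^\circ\\1&c^\circ&d^\circ\end{pmatrix}.$$ Then $$a'=(d-1)^{-1}(d-c)a^{-1}(db^{-1}-ca^{-1})^{-1}(db^{-1}-1),\qquad a^\circ=(d-1)(d-c)^{-1}(db^{-1}-ca^{-1})(db^{-1}-1)^{-1}.$$
   Context: $R^*$: units of $R$. $M_3^*(R)$: invertible $3\times3$ matrices; $M_3^\star(R)$: matrices with all entries in $R^*$. $J_1(M)=M^{-1}$ on $M_3^*(R)$; $J_2(M)_{jk}=(M_{kj})^{-1}$ on $M_3^\star(R)$; $J=J_2\circ J_1$, $J^{-1}=J_1\circ J_2$. $\widehat M_3(R)$: matrices whose first row and column consist of $1$'s. For $A=\{a_{j,k}\}\in M_3^\star(R)$: $\Lambda^L(A)_{j,k}=a_{1,1}a_{j,1}^{-1}a_{j,k}a_{1,k}^{-1}$, $\Lambda^R(A)_{j,k}=a_{j,1}^{-1}a_{j,k}a_{1,k}^{-1}a_{1,1}$. $\Phi(A)=J_2(\Lambda^L(A^{-1}))$ and $\Phi^{-1}(A)=\Lambda^R(J^{-1}(A))$ (both defined on $\widehat{\cal S}$). ${\cal S}=\{M\in M_3(R):$ all square submatrices of $M$ are invertible and $J_2(M)$ is invertible$\}$, $\widehat{\cal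 S}={\cal S}\cap\widehat M_3(R)$. *)

theory Defs
  imports Main
begin

text \<open>Matrices over a unital associative (not necessarily commutative) ring are
represented as functions nat => nat => 'a; only the entries with indices
below the size n are meaningful. Indices are 0-based (paper index j is j-1 here).\<close>

definition is_unit :: "'a::ring_1 \<Rightarrow> bool" where
  "is_unit x \<longleftrightarrow> (\<exists>y. x * y = 1 \<and> y * x = 1)"

definition uinv :: "'a::ring_1 \<Rightarrow> 'a" where
  "uinv x = (THE y. x * y = 1 \<and> y * x = 1)"

definition mmult :: "nat \<Rightarrow> (nat \<Rightarrow> nat \<Rightarrow> 'a::ring_1) \<Rightarrow> (nat \<Rightarrow> nat \<Rightarrow> 'a) \<Rightarrow> nat \<Rightarrow> nat \<Rightarrow> 'a" where
  "mmult n A B = (\<lambda>i j. \<Sum>l<n. A i l * B l j)"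

definition is_minv :: "nat \<Rightarrow> (nat \<Rightarrow> nat \<Rightarrow> 'a::ring_1) \<Rightarrow> (nat \<Rightarrow> nat \<Rightarrow> 'a) \<Rightarrow> bool" where
  "is_minv n A B \<longleftrightarrow> (\<forall>i<n. \<forall>j<n. mmult n A B i j = (if i = j then 1 else 0)
                                 \<and> mmult n B A i j = (if i = j then 1 else 0))"

definition minvertible :: "nat \<Rightarrow> (nat \<Rightarrow> nat \<Rightarrow> 'a::ring_1) \<Rightarrow> bool" where
  "minvertible n A \<longleftrightarrow> (\<exists>B. is_minv n A B)"

text \<open>The inverse matrix (unique on indices below n); entries outside are set to 0.\<close>
definition minv :: "nat \<Rightarrow> (nat \<Rightarrow> nat \<Rightarrow> 'a::ring_1) \<Rightarrow> nat \<Rightarrow> nat \<Rightarrow> 'a" where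
  "minv n A = (THE B. is_minv n A B \<and> (\<forall>i j. \<not> (i < n \<and> j < n) \<longrightarrow> B i j = 0))"

definition submat :: "(nat \<Rightarrow> nat \<Rightarrow> 'a) \<Rightarrow> nat set \<Rightarrow> nat set \<Rightarrow> nat \<Rightarrow> nat \<Rightarrow> 'a" where
  "submat A I J = (\<lambda>i j. A (sorted_list_of_set I ! i) (sorted_list_of_set J ! j))"

definition all_sq_submats_invertible :: "(nat \<Rightarrow> nat \<Rightarrow> 'a::ring_1) \<Rightarrow> bool" where
  "all_sq_submats_invertible A \<longleftrightarrow>
     (\<forall>I J. I \<subseteq> {..<3} \<and> J \<subseteq> {..<3} \<and> I \<noteq> {} \<and> card I = card J
            \<longrightarrow> minvertible (card I) (submat A I J))"

definition J1 :: "(nat \<Rightarrow> nat \<Rightarrow> 'a::ring_1) \<Rightarrow> nat \<Rightarrow> nat \<Rightarrow> 'a" where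
  "J1 M = minv 3 M"

definition J2 :: "(nat \<Rightarrow> nat \<Rightarrow> 'a::ring_1) \<Rightarrow> nat \<Rightarrow> nat \<Rightarrow> 'a" where
  "J2 M = (\<lambda>j k. uinv (M k j))"

definition JJ :: "(nat \<Rightarrow> nat \<Rightarrow> 'a::ring_1) \<Rightarrow> nat \<Rightarrow> nat \<Rightarrow> 'a" where
  "JJ M = J2 (J1 M)"

definition JJinv :: "(nat \<Rightarrow> nat \<Rightarrow> 'a::ring_1) \<Rightarrow> nat \<Rightarrow> nat \<Rightarrow> 'a" where
  "JJinv M = J1 (J2 M)"

definition LambdaL :: "(nat \<Rightarrow> nat \<Rightarrow> 'a::ring_1) \<Rightarrow> nat \<Rightarrow> nat \<Rightarrow> 'a" where
  "LambdaL A = (\<lambda>j k. A 0 0 * uinv (A j 0) * A j k * uinv (A 0 k))"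

definition LambdaR :: "(nat \<Rightarrow> nat \<Rightarrow> 'a::ring_1) \<Rightarrow> nat \<Rightarrow> nat \<Rightarrow> 'a" where
  "LambdaR A = (\<lambda>j k. uinv (A j 0) * A j k * uinv (A 0 k) * A 0 0)"

definition Phi :: "(nat \<Rightarrow> nat \<Rightarrow> 'a::ring_1) \<Rightarrow> nat \<Rightarrow> nat \<Rightarrow> 'a" where
  "Phi A = J2 (LambdaL (minv 3 A))"

definition Phi_inv :: "(nat \<Rightarrow> nat \<Rightarrow> 'a::ring_1) \<Rightarrow> nat \<Rightarrow> nat \<Rightarrow> 'a" where
  "Phi_inv A = LambdaR (JJinv A)"

definition in_S :: "(nat \<Rightarrow> nat \<Rightarrow> 'a::ring_1) \<Rightarrow> bool" where
  "in_S M \<longleftrightarrow> all_sq_submats_invertible M \<and> minvertible 3 (J2 M)"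

definition in_hatM3 :: "(nat \<Rightarrow> nat \<Rightarrow> 'a::ring_1) \<Rightarrow> bool" where
  "in_hatM3 M \<longleftrightarrow> (\<forall>k<3. M 0 k = 1 \<and> M k 0 = 1)"

definition in_hatS :: "(nat \<Rightarrow> nat \<Rightarrow> 'a::ring_1) \<Rightarrow> bool" where
  "in_hatS M \<longleftrightarrow> in_S M \<and> in_hatM3 M"

definition mat3 :: "'a::zero \<Rightarrow> 'a \<Rightarrow> 'a \<Rightarrow> 'a \<Rightarrow> 'a \<Rightarrow> 'a \<Rightarrow> 'a \<Rightarrow> 'a \<Rightarrow> 'a \<Rightarrow> nat \<Rightarrow> nat \<Rightarrow> 'a" where
  "mat3 x00 x01 x02 x10 x11 x12 x20 x21 x22 = (\<lambda>i j.
     if i = 0 then (if j = 0 then x00 else if j = 1 then x01 else if j = 2 then x02 else 0)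
     else if i = 1 then (if j = 0 then x10 else if j = 1 then x11 else if j = 2 then x12 else 0)
     else if i = 2 then (if j = 0 then x20 else if j = 1 then x21 else if j = 2 then x22 else 0)
     else 0)"

end

theory Submission
  imports Defs
begin

text \<open>Both entries are read off from an inverse matrix: \<open>B = A\<^sup>-\<^sup>1\<close> for \<open>\<Phi>\<close> and
\<open>D = J\<^sub>2(A)\<^sup>-\<^sup>1\<close> for \<open>\<Phi>\<^sup>-\<^sup>1\<close>. The \<open>(1,1)\<close> entry of \<open>\<Phi>(A)\<close>, resp. \<open>\<Phi>\<^sup>-\<^sup>1(A)\<close>,
is a product of two ratios of entries, each taken within one column of \<open>B\<close> (resp. one
row of \<open>D\<close>). Each ratio is determined by two of the linear relations \<open>AB = 1\<close>
(resp. \<open>DJ\<^sub>2(A) = 1\<close>): eliminating the third unknown leaves a single equation between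
the two entries, with coefficients in \<open>a, b, c, d\<close>. The entries being inverted are units
by a noncommutative Cramer rule: an entry of the inverse of a \<open>3\<times>3\<close> matrix is a unit as
soon as the complementary \<open>2\<times>2\<close> block is invertible, which here follows from the
invertibility of the \<open>2\<times>2\<close> minors of \<open>A\<close> through their Schur complements.\<close>

lemma left_inverse_eq_right_inverse:
  fixes x :: "'a::ring_1"
  assumes "x * y = 1" and "z * x = 1"
  shows "z = y"
  by (metis assms mult.assoc mult_1_left mult_1_right)

lemma uinv_eqI:
  fixes x :: "'a::ring_1"
  assumes "x * y = 1" and "y * x = 1"
  shows "uinv x = y"
  unfolding uinv_def using assms left_inverse_eq_right_inverse by (intro the_equality) blast+

lemma is_unitI:
  fixes x :: "'a::ring_1"
  assumes "x * y = 1" and "z * x = 1"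
  shows "is_unit x"
  using assms left_inverse_eq_right_inverse unfolding is_unit_def by metis

lemma unit_right_inverse [simp]: "is_unit x \<Longrightarrow> x * uinv x = 1"
  and unit_left_inverse [simp]: "is_unit x \<Longrightarrow> uinv x * x = 1"
  using uinv_eqI unfolding is_unit_def by metis+

lemma uinv_cancel [simp]:
  fixes x y :: "'a::ring_1"
  assumes "is_unit x"
  shows "x * (uinv x * y) = y" "uinv x * (x * y) = y" "y * x * uinv x = y" "y * uinv x * x = y"
  using assms by (simp_all flip: mult.assoc) (simp_all add: mult.assoc)

lemma is_unit_one [simp]: "is_unit (1::'a::ring_1)"
  and uinv_one [simp]: "uinv (1::'a::ring_1) = 1"
  using uinv_eqI[of "1::'a" 1] unfolding is_unit_def by auto

lemma is_unit_mult [simp]: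
  fixes x y :: "'a::ring_1"
  assumes "is_unit x" and "is_unit y"
  shows "is_unit (x * y)"
  using assms by (intro is_unitI[of _ "uinv y * uinv x" "uinv y * uinv x"]) (simp_all add: mult.assoc)

lemma uinv_mult [simp]:
  fixes x y :: "'a::ring_1"
  assumes "is_unit x" and "is_unit y"
  shows "uinv (x * y) = uinv y * uinv x"
  using assms by (intro uinv_eqI) (simp_all add: mult.assoc)

lemma is_unit_uinv [simp]: "is_unit x \<Longrightarrow> is_unit (uinv x)"
  and uinv_uinv [simp]: "is_unit x \<Longrightarrow> uinv (uinv x) = x"
  by (auto intro: is_unitI[of _ x x] uinv_eqI)

lemma is_unit_minus [simp]: "is_unit x \<Longrightarrow> is_unit (- x)"
  and uinv_minus [simp]: "is_unit x \<Longrightarrow> uinv (- x) = - uinv x"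
  by (auto intro: is_unitI[of _ "- uinv x" "- uinv x"] uinv_eqI)

lemma is_unit_diff_commute: "is_unit (x - y) \<Longrightarrow> is_unit (y - x)"
  using is_unit_minus[of "x - y"] by simp

lemma is_unit_uinv_diff:
  fixes x y :: "'a::ring_1"
  assumes "is_unit x" and "is_unit y" and "is_unit (y - x)"
  shows "is_unit (uinv x - uinv y)"
proof -
  have "uinv x - uinv y = uinv x * (y - x) * uinv y"
    using assms(1,2) by (simp add: algebra_simps mult.assoc)
  then show ?thesis using assms by simp
qed

lemma solve_right_linear:
  fixes u w y :: "'a::ring_1"
  assumes "is_unit u" and "y * u + w = 0"
  shows "y = - w * uinv u"
proof -
  have "y * u = - w" using assms(2) by (simp add: eq_neg_iff_add_eq_0)
  then show ?thesis by (metis assms(1) uinv_cancel(3))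
qed

lemma solve_left_linear:
  fixes u w y :: "'a::ring_1"
  assumes "is_unit u" and "u * y + w = 0"
  shows "y = - (uinv u * w)"
proof -
  have "u * y = - w" using assms(2) by (simp add: eq_neg_iff_add_eq_0)
  then show ?thesis by (metis assms(1) uinv_cancel(2) mult_minus_right)
qed

lemma mult_uinv_eq_if_mult_eq:
  fixes u w x y :: "'a::ring_1"
  assumes "is_unit u" and "is_unit x" and "u * y = w * x"
  shows "y * uinv x = uinv u * w"
proof -
  have "y * uinv x = uinv u * (u * y) * uinv x" using assms(1) by simp
  also have "\<dots> = uinv u * w" using assms by (simp add: mult.assoc)
  finally show ?thesis .
qed

lemma uinv_mult_eq_if_mult_eq:
  fixes u w x y :: "'a::ring_1"
  assumes "is_unit u" and "is_unit x" and "y * u = x * w"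
  shows "uinv x * y = w * uinv u"
proof -
  have "uinv x * y = uinv x * (y * u) * uinv u" using assms(1) by (simp add: mult.assoc)
  also have "\<dots> = w * uinv u" using assms by (simp flip: mult.assoc)
  finally show ?thesis .
qed

lemma eliminate_left:
  fixes p q r s x y z :: "'a::ring_1"
  assumes "is_unit q" and "x + p * y + q * z = 0" and "x + r * y + s * z = 0"
  shows "(r - s * uinv q * p) * y = (s * uinv q - 1) * x"
proof -
  have z: "z = - (uinv q * (x + p * y))"
    using assms(1,2) by (intro solve_left_linear) (simp_all add: algebra_simps)
  have "(r - s * uinv q * p) * y - (s * uinv q - 1) * x = x + r * y + s * z"
    unfolding z by (simp add: algebra_simps)
  then show ?thesis using assms(3) by simp
qed

lemma eliminate_right:
  fixes p q r s x y z :: "'a::ring_1"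
  assumes "is_unit q" and "x + y * p + z * q = 0" and "x + y * r + z * s = 0"
  shows "y * (r - p * uinv q * s) = x * (uinv q * s - 1)"
proof -
  have z: "z = - (x + y * p) * uinv q"
    using assms(1,2) by (intro solve_right_linear) (simp_all add: algebra_simps)
  have "y * (r - p * uinv q * s) - x * (uinv q * s - 1) = x + y * r + z * s"
    unfolding z by (simp add: algebra_simps)
  then show ?thesis using assms(3) by simp
qed

lemma schur_complement_unit:
  fixes m11 m12 m21 m22 n01 n10 n11 :: "'a::ring_1"
  assumes "is_unit m11"
    and "m11 * n01 + m12 * n11 = 0" and "m21 * n01 + m22 * n11 = 1"
    and "n10 * m11 + n11 * m21 = 0" and "n10 * m12 + n11 * m22 = 1"
  shows "is_unit (m22 - m21 * uinv m11 * m12)"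
proof (rule is_unitI)
  have "n01 = - (uinv m11 * (m12 * n11))"
    using assms(1,2) by (rule solve_left_linear)
  then show "(m22 - m21 * uinv m11 * m12) * n11 = 1"
    using assms(3) by (simp add: algebra_simps mult.assoc)
  have "n10 = - (n11 * m21) * uinv m11"
    using assms(1,4) by (rule solve_right_linear)
  then show "n11 * (m22 - m21 * uinv m11 * m12) = 1"
    using assms(5) by (simp add: algebra_simps mult.assoc)
qed

text \<open>The right inverse constructed below is the Schur complement of the lower right block
\<open>((q1, q2), (r1, r2))\<close> in the matrix with rows \<open>(p0, p1, p2)\<close>, \<open>(q0, q1, q2)\<close>, \<open>(r0, r1, r2)\<close>.\<close>

lemma right_invertible_of_row_relations:
  fixes x x1 x2 p0 p1 p2 q0 q1 q2 r0 r1 r2 :: "'a::ring_1"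
  assumes "is_unit q1" and "is_unit (r2 - r1 * uinv q1 * q2)"
    and "x * p0 + x1 * q0 + x2 * r0 = 1"
    and "x * p1 + x1 * q1 + x2 * r1 = 0"
    and "x * p2 + x1 * q2 + x2 * r2 = 0"
  shows "\<exists>x'. x * x' = 1"
proof -
  define S where "S = r2 - r1 * uinv q1 * q2"
  have x1: "x1 = - (x * p1 + x2 * r1) * uinv q1"
    using assms(1,4) by (intro solve_right_linear) (simp_all add: algebra_simps)
  have x2: "x2 = - (x * (p2 - p1 * uinv q1 * q2)) * uinv S"
    using assms(2,5) unfolding x1 S_def by (intro solve_right_linear) (simp_all add: algebra_simps)
  have "x * ((p0 - p1 * uinv q1 * q0) - (p2 - p1 * uinv q1 * q2) * uinv S * (r0 - r1 * uinv q1 * q0)) = 1"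
    using assms(3) unfolding x2 x1 by (simp add: algebra_simps)
  then show ?thesis ..
qed

lemma left_invertible_of_column_relations:
  fixes y y1 y2 p0 p1 p2 q0 q1 q2 r0 r1 r2 :: "'a::ring_1"
  assumes "is_unit q1" and "is_unit (r2 - r1 * uinv q1 * q2)"
    and "p0 * y + p1 * y1 + p2 * y2 = 1"
    and "q0 * y + q1 * y1 + q2 * y2 = 0"
    and "r0 * y + r1 * y1 + r2 * y2 = 0"
  shows "\<exists>y'. y' * y = 1"
proof -
  define S where "S = r2 - r1 * uinv q1 * q2"
  have y1: "y1 = - (uinv q1 * (q0 * y + q2 * y2))"
    using assms(1,4) by (intro solve_left_linear) (simp_all add: algebra_simps)
  have y2: "y2 = - (uinv S * ((r0 - r1 * uinv q1 * q0) * y))"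
    using assms(2,5) unfolding y1 S_def by (intro solve_left_linear) (simp_all add: algebra_simps)
  have "((p0 - p1 * uinv q1 * q0) - (p2 - p1 * uinv q1 * q2) * uinv S * (r0 - r1 * uinv q1 * q0)) * y = 1"
    using assms(3) unfolding y2 y1 by (simp add: algebra_simps)
  then show ?thesis ..
qed

lemma sum_lessThan_3:
  fixes f :: "nat \<Rightarrow> 'a::comm_monoid_add"
  assumes "distinct [j, j1, j2]" and "j < 3" and "j1 < 3" and "j2 < 3"
  shows "(\<Sum>l<3. f l) = f j + f j1 + f j2"
proof -
  have "{..<3::nat} = {j, j1, j2}"
    using assms by (intro card_subset_eq[symmetric]) auto
  then show ?thesis using assms(1) by (simp add: add.assoc)
qed

lemma mat3_apply [simp]:
  "mat3 x00 x01 x02 x10 x11 x12 x20 x21 x22 0 0 = x00"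
  "mat3 x00 x01 x02 x10 x11 x12 x20 x21 x22 0 1 = x01"
  "mat3 x00 x01 x02 x10 x11 x12 x20 x21 x22 0 2 = x02"
  "mat3 x00 x01 x02 x10 x11 x12 x20 x21 x22 1 0 = x10"
  "mat3 x00 x01 x02 x10 x11 x12 x20 x21 x22 1 1 = x11"
  "mat3 x00 x01 x02 x10 x11 x12 x20 x21 x22 1 2 = x12"
  "mat3 x00 x01 x02 x10 x11 x12 x20 x21 x22 2 0 = x20"
  "mat3 x00 x01 x02 x10 x11 x12 x20 x21 x22 2 1 = x21"
  "mat3 x00 x01 x02 x10 x11 x12 x20 x21 x22 2 2 = x22"
  by (simp_all add: mat3_def)

text \<open>The simplifier may present the index \<open>1\<close> as \<open>Suc 0\<close>.\<close>
lemmas mat3_apply_Suc_0 [simp] = mat3_apply[unfolded One_nat_def]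

lemma is_minv_unique:
  fixes A B C :: "nat \<Rightarrow> nat \<Rightarrow> 'a::ring_1"
  assumes B: "is_minv n A B" and C: "is_minv n A C" and "i < n" and "j < n"
  shows "B i j = C i j"
proof -
  have "B i j = (\<Sum>k<n. B i k * (if k = j then 1 else 0))"
    using \<open>j < n\<close> by (simp add: if_distrib cong: if_cong)
  also have "\<dots> = (\<Sum>k<n. B i k * mmult n A C k j)"
    using C \<open>j < n\<close> by (intro sum.cong) (auto simp: is_minv_def)
  also have "\<dots> = (\<Sum>l<n. mmult n B A i l * C l j)"
    unfolding mmult_def sum_distrib_left sum_distrib_right mult.assoc by (rule sum.swap)
  also have "\<dots> = (\<Sum>l<n. (if i = l then 1 else 0) * C l j)"
    using B \<open>i < n\<close> by (intro sum.cong) (auto simp: is_minv_def)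
  also have "\<dots> = C i j"
    using \<open>i < n\<close> by (simp add: if_distrib[of "\<lambda>x. x * _"] cong: if_cong)
  finally show ?thesis .
qed

lemma is_minv_minv:
  fixes A :: "nat \<Rightarrow> nat \<Rightarrow> 'a::ring_1"
  assumes "minvertible n A"
  shows "is_minv n A (minv n A)"
proof -
  let ?P = "\<lambda>B. is_minv n A B \<and> (\<forall>i j. \<not> (i < n \<and> j < n) \<longrightarrow> B i j = 0)"
  obtain B where B: "is_minv n A B" using assms unfolding minvertible_def by blast
  define B' where "B' i j = (if i < n \<and> j < n then B i j else 0)" for i j
  have "mmult n A B' i j = mmult n A B i j" "mmult n B' A i j = mmult n B A i j"
    if "i < n" "j < n" for i j
    using that unfolding mmult_def B'_def by (auto intro!: sum.cong)
  then have "?P B'" using B unfolding is_minv_def B'_def by simp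
  moreover have "C = B'" if "?P C" for C
    using that \<open>?P B'\<close> is_minv_unique[of n A C B'] by (intro ext) (metis B'_def)
  ultimately have "?P (minv n A)" unfolding minv_def by (rule theI)
  then show ?thesis ..
qed

lemma is_minv_3_expand:
  fixes A B :: "nat \<Rightarrow> nat \<Rightarrow> 'a::ring_1"
  assumes "is_minv 3 A B" and "distinct [j, j1, j2]" and "i < 3" "k < 3" "j < 3" "j1 < 3" "j2 < 3"
  shows "A i j * B j k + A i j1 * B j1 k + A i j2 * B j2 k = (if i = k then 1 else 0)"
    and "B i j * A j k + B i j1 * A j1 k + B i j2 * A j2 k = (if i = k then 1 else 0)"
  using assms(1,3,4) unfolding is_minv_def mmult_def sum_lessThan_3[OF assms(2,5-7)] by simp_all

lemma is_minv_3_cofactor_unit: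
  fixes A B :: "nat \<Rightarrow> nat \<Rightarrow> 'a::ring_1"
  assumes "is_minv 3 A B"
    and "distinct [i, i1, i2]" "i < 3" "i1 < 3" "i2 < 3"
    and "distinct [j, j1, j2]" "j < 3" "j1 < 3" "j2 < 3"
    and "is_unit (A i1 j1)" and "is_unit (A i2 j2 - A i2 j1 * uinv (A i1 j1) * A i1 j2)"
  shows "is_unit (B j i)"
proof -
  note AB = is_minv_3_expand(1)[OF assms(1,6) _ _ assms(7-9)]
  note BA = is_minv_3_expand(2)[OF assms(1,2) _ _ assms(3-5)]
  have row: "B j i * A i j + B j i1 * A i1 j + B j i2 * A i2 j = 1"
    "B j i * A i j1 + B j i1 * A i1 j1 + B j i2 * A i2 j1 = 0"
    "B j i * A i j2 + B j i1 * A i1 j2 + B j i2 * A i2 j2 = 0"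
    using BA[of j j] BA[of j j1] BA[of j j2] assms by auto
  have column: "A i j * B j i + A i j1 * B j1 i + A i j2 * B j2 i = 1"
    "A i1 j * B j i + A i1 j1 * B j1 i + A i1 j2 * B j2 i = 0"
    "A i2 j * B j i + A i2 j1 * B j1 i + A i2 j2 * B j2 i = 0"
    using AB[of i i] AB[of i1 i] AB[of i2 i] assms by auto
  obtain x' where "B j i * x' = 1"
    using right_invertible_of_row_relations[OF assms(10,11) row] ..
  moreover obtain y' where "y' * B j i = 1"
    using left_invertible_of_column_relations[OF assms(10,11) column] ..
  ultimately show ?thesis by (rule is_unitI)
qed

lemma all_sq_submats_invertible_unit:
  fixes M :: "nat \<Rightarrow> nat \<Rightarrow> 'a::ring_1"
  assumes "all_sq_submats_invertible M" and "i < 3" and "j < 3"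
  shows "is_unit (M i j)"
proof -
  have "minvertible 1 (submat M {i} {j})"
    using assms(1)[unfolded all_sq_submats_invertible_def, rule_format, of "{i}" "{j}"] assms(2,3)
    by simp
  then obtain N where "is_minv 1 (submat M {i} {j}) N" unfolding minvertible_def ..
  then have "M i j * N 0 0 = 1" "N 0 0 * M i j = 1"
    unfolding is_minv_def mmult_def submat_def by auto
  then show ?thesis by (rule is_unitI)
qed

lemma all_sq_submats_invertible_schur_unit:
  fixes M :: "nat \<Rightarrow> nat \<Rightarrow> 'a::ring_1"
  assumes "all_sq_submats_invertible M"
    and "i1 < i2" and "i2 < 3" and "j1 < j2" and "j2 < 3"
  shows "is_unit (M i2 j2 - M i2 j1 * uinv (M i1 j1) * M i1 j2)"
proof -
  let ?S = "submat M {i1, i2} {j1, j2}"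
  have "minvertible 2 ?S"
    using assms(1)[unfolded all_sq_submats_invertible_def, rule_format, of "{i1, i2}" "{j1, j2}"]
      assms(2-5) by (simp add: numeral_2_eq_2)
  then obtain N where N: "is_minv 2 ?S N" unfolding minvertible_def ..
  have "mmult 2 ?S N 0 1 = 0" "mmult 2 ?S N 1 1 = 1" "mmult 2 N ?S 1 0 = 0" "mmult 2 N ?S 1 1 = 1"
    using N unfolding is_minv_def by auto
  moreover have "sorted_list_of_set {i1, i2} = [i1, i2]" "sorted_list_of_set {j1, j2} = [j1, j2]"
    using assms(2,4) by simp_all
  ultimately have "M i1 j1 * N 0 1 + M i1 j2 * N 1 1 = 0" "M i2 j1 * N 0 1 + M i2 j2 * N 1 1 = 1"
    "N 1 0 * M i1 j1 + N 1 1 * M i2 j1 = 0" "N 1 0 * M i1 j2 + N 1 1 * M i2 j2 = 1"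
    unfolding mmult_def submat_def by (simp_all add: numeral_2_eq_2)
  moreover have "is_unit (M i1 j1)"
    using assms by (intro all_sq_submats_invertible_unit) auto
  ultimately show ?thesis by (intro schur_complement_unit)
qed

lemma minvertible_cong:
  fixes M M' :: "nat \<Rightarrow> nat \<Rightarrow> 'a::ring_1"
  assumes "minvertible n M" and "\<And>i j. i < n \<Longrightarrow> j < n \<Longrightarrow> M i j = M' i j"
  shows "minvertible n M'"
proof -
  obtain B where B: "is_minv n M B" using assms(1) unfolding minvertible_def ..
  have "mmult n M B i j = mmult n M' B i j" "mmult n B M i j = mmult n B M' i j"
    if "i < n" "j < n" for i j
    using that assms(2) unfolding mmult_def by (auto intro!: sum.cong)
  then have "is_minv n M' B" using B unfolding is_minv_def by simp
  then show ?thesis unfolding minvertible_def by blast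
qed

lemma all_sq_submats_invertible_minvertible:
  fixes M :: "nat \<Rightarrow> nat \<Rightarrow> 'a::ring_1"
  assumes "all_sq_submats_invertible M"
  shows "minvertible 3 M"
proof (rule minvertible_cong)
  show "minvertible 3 (submat M {..<3} {..<3})"
    using assms[unfolded all_sq_submats_invertible_def, rule_format, of "{..<3}" "{..<3}"]
    by (simp add: lessThan_empty_iff)
  have "sorted_list_of_set {..<3::nat} = [0..<3]" by (simp add: lessThan_atLeast0)
  then show "submat M {..<3} {..<3} i j = M i j" if "i < 3" "j < 3" for i j
    using that unfolding submat_def by simp
qed

lemma Phi_ring_identity:
  fixes a b c d x0 x1 y0 y1 z0 z1 :: "'a::ring_1"
  assumes "is_unit a" "is_unit b" "is_unit (d - 1)" "is_unit (d - c * uinv a * b)"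
    and "is_unit x0" "is_unit y0" "is_unit x1" "is_unit y1"
    and "x1 + y1 + z1 = 0" "x1 + c * y1 + d * z1 = 0"
    and "x0 + a * y0 + b * z0 = 0" "x0 + c * y0 + d * z0 = 0"
  shows "uinv (x0 * uinv y0 * y1 * uinv x1) =
    uinv (d - 1) * (d - c) * uinv a * uinv (d * uinv b - c * uinv a) * (d * uinv b - 1)"
proof -
  define K where "K = d - c * uinv a * b"
  have "(c - d) * y1 = (d - 1) * x1"
    using eliminate_left[OF is_unit_one, where p = 1 and r = c and s = d] assms(9,10) by simp
  then have x1_y1: "x1 * uinv y1 = uinv (d - 1) * (c - d)"
    using assms(3,8) by (intro mult_uinv_eq_if_mult_eq) simp_all
  have T: "c - d * uinv b * a = - (K * uinv b * a)"
    using assms(1,2) unfolding K_def by (simp add: algebra_simps mult.assoc)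
  have uinv_T: "is_unit (c - d * uinv b * a)" "uinv (c - d * uinv b * a) = - (uinv a * b * uinv K)"
    using assms(1,2,4) unfolding T K_def by (simp_all add: mult.assoc)
  have "y0 * uinv x0 = uinv (c - d * uinv b * a) * (d * uinv b - 1)"
    using uinv_T(1) assms(5) eliminate_left[OF assms(2,11,12)] by (rule mult_uinv_eq_if_mult_eq)
  then have y0_x0: "y0 * uinv x0 = - (uinv a * b * uinv K) * (d * uinv b - 1)"
    unfolding uinv_T(2) .
  have uinv_V: "uinv (d * uinv b - c * uinv a) = b * uinv K"
  proof -
    have "d * uinv b - c * uinv a = K * uinv b"
      using assms(2) unfolding K_def by (simp add: algebra_simps mult.assoc)
    then show ?thesis using assms(2,4) unfolding K_def by simp
  qed
  have "uinv (x0 * uinv y0 * y1 * uinv x1) = x1 * uinv y1 * (y0 * uinv x0)"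
    using assms(5-8) by (simp add: mult.assoc)
  also have "\<dots> = uinv (d - 1) * (c - d) * (- (uinv a * b * uinv K) * (d * uinv b - 1))"
    unfolding x1_y1 y0_x0 ..
  also have "\<dots> = uinv (d - 1) * (d - c) * uinv a * (b * uinv K) * (d * uinv b - 1)"
    by (simp add: algebra_simps)
  finally show ?thesis unfolding uinv_V by (simp add: mult.assoc)
qed

lemma Phi_inv_ring_identity:
  fixes a b c d x0 x1 x2 y0 y1 y2 :: "'a::ring_1"
  assumes "is_unit a" "is_unit b" "is_unit c" "is_unit d" "is_unit (d - c)" "is_unit (d - b)"
    and "is_unit y0" "is_unit x1"
    and "y0 + y1 + y2 = 0" "y0 + y1 * uinv c + y2 * uinv d = 0"
    and "x0 + x1 * uinv a + x2 * uinv b = 0" "x0 + x1 * uinv c + x2 * uinv d = 0"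
  shows "uinv y0 * y1 * uinv x1 * x0 =
    (d - 1) * uinv (d - c) * (d * uinv b - c * uinv a) * uinv (d * uinv b - 1)"
proof -
  define K where "K = d - c * uinv a * b"
  have E: "uinv c - uinv d = uinv c * (d - c) * uinv d"
    using assms(3,4) by (simp add: algebra_simps mult.assoc)
  have "y1 * (uinv c - uinv d) = y0 * (uinv d - 1)"
    using eliminate_right[OF is_unit_one, where p = 1 and r = "uinv c" and s = "uinv d"] assms(9,10) by simp
  then have "uinv y0 * y1 = (uinv d - 1) * uinv (uinv c - uinv d)"
    using assms(3-5,7) unfolding E by (intro uinv_mult_eq_if_mult_eq) simp_all
  also have "uinv (uinv c - uinv d) = d * uinv (d - c) * c"
    using assms(3-5) unfolding E by (simp add: mult.assoc)
  finally have y0_y1: "uinv y0 * y1 = (uinv d - 1) * (d * uinv (d - c) * c)" .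
  have Q: "b * uinv d - 1 = - ((d - b) * uinv d)"
    using assms(4) by (simp add: algebra_simps)
  have "x1 * (uinv c - uinv a * b * uinv d) = x0 * (b * uinv d - 1)"
    using eliminate_right[OF is_unit_uinv[OF assms(2)] assms(11,12)] assms(2) by simp
  then have "uinv x1 * x0 = (uinv c - uinv a * b * uinv d) * uinv (b * uinv d - 1)"
    using assms(4,6,8) unfolding Q by (intro uinv_mult_eq_if_mult_eq) simp_all
  also have "uinv (b * uinv d - 1) = - (d * uinv (d - b))"
    using assms(4,6) unfolding Q by simp
  finally have x1_x0: "uinv x1 * x0 = (uinv c - uinv a * b * uinv d) * - (d * uinv (d - b))" .
  have "uinv y0 * y1 * uinv x1 * x0 = (uinv y0 * y1) * (uinv x1 * x0)"
    by (simp add: mult.assoc)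
  also have "\<dots> =
      - ((uinv d - 1) * d * uinv (d - c) * (c * (uinv c - uinv a * b * uinv d) * d) * uinv (d - b))"
    unfolding x1_x0 y0_y1 by (simp add: mult.assoc)
  also have "(uinv d - 1) * d = 1 - d"
    using assms(4) by (simp add: algebra_simps)
  also have "c * (uinv c - uinv a * b * uinv d) * d = K"
    using assms(3,4) unfolding K_def by (simp add: algebra_simps mult.assoc)
  also have "- ((1 - d) * uinv (d - c) * K * uinv (d - b)) =
      (d - 1) * uinv (d - c) * (K * uinv b) * (b * uinv (d - b))"
    using assms(2) by (simp add: algebra_simps)
  also have "K * uinv b = d * uinv b - c * uinv a"
    using assms(2) unfolding K_def by (simp add: algebra_simps mult.assoc)
  also have "b * uinv (d - b) = uinv (d * uinv b - 1)"
  proof -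
    have "d * uinv b - 1 = (d - b) * uinv b" using assms(2) by (simp add: algebra_simps)
    then show ?thesis using assms(2,6) by simp
  qed
  finally show ?thesis .
qed

lemma in_hatS_mat3_units:
  fixes a b c d :: "'a::ring_1"
  assumes "in_hatS (mat3 1 1 1 1 a b 1 c d)"
  shows "is_unit a" "is_unit b" "is_unit c" "is_unit d"
    and "is_unit (d - 1)" "is_unit (d - c)" "is_unit (d - b)" "is_unit (d - c * uinv a * b)"
proof -
  have S: "all_sq_submats_invertible (mat3 1 1 1 1 a b 1 c d)"
    using assms unfolding in_hatS_def in_S_def by simp
  show "is_unit a" "is_unit b" "is_unit c" "is_unit d"
    using all_sq_submats_invertible_unit[OF S, of 1 1] all_sq_submats_invertible_unit[OF S, of 1 2]
      all_sq_submats_invertible_unit[OF S, of 2 1] all_sq_submats_invertible_unit[OF S, of 2 2]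
    by simp_all
  show "is_unit (d - 1)" "is_unit (d - c)" "is_unit (d - b)" "is_unit (d - c * uinv a * b)"
    using all_sq_submats_invertible_schur_unit[OF S, of 0 2 0 2]
      all_sq_submats_invertible_schur_unit[OF S, of 0 2 1 2]
      all_sq_submats_invertible_schur_unit[OF S, of 1 2 0 2]
      all_sq_submats_invertible_schur_unit[OF S, of 1 2 1 2]
    by simp_all
qed

lemma Phi_mat3_11:
  fixes a b c d :: "'a::ring_1"
  assumes "in_hatS (mat3 1 1 1 1 a b 1 c d)"
  shows "Phi (mat3 1 1 1 1 a b 1 c d) 1 1 =
    uinv (d - 1) * (d - c) * uinv a * uinv (d * uinv b - c * uinv a) * (d * uinv b - 1)"
proof -
  define A where "A = mat3 1 1 1 1 a b 1 c d"
  define B where "B = minv 3 A"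
  note units = in_hatS_mat3_units[OF assms]
  have "all_sq_submats_invertible A" using assms unfolding in_hatS_def in_S_def A_def by simp
  then have B: "is_minv 3 A B"
    unfolding B_def by (intro is_minv_minv all_sq_submats_invertible_minvertible)
  have entry_units: "is_unit (B 0 0)" "is_unit (B 1 0)" "is_unit (B 0 1)" "is_unit (B 1 1)"
    using is_minv_3_cofactor_unit[OF B, of 0 1 2 0 1 2] is_minv_3_cofactor_unit[OF B, of 0 1 2 1 0 2]
      is_minv_3_cofactor_unit[OF B, of 1 0 2 0 1 2] is_minv_3_cofactor_unit[OF B, of 1 0 2 1 0 2]
    units unfolding A_def by simp_all
  have relations: "B 0 1 + B 1 1 + B 2 1 = 0" "B 0 1 + c * B 1 1 + d * B 2 1 = 0"
    "B 0 0 + a * B 1 0 + b * B 2 0 = 0" "B 0 0 + c * B 1 0 + d * B 2 0 = 0"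
    using is_minv_3_expand(1)[OF B, of 0 1 2 0 1] is_minv_3_expand(1)[OF B, of 0 1 2 2 1]
      is_minv_3_expand(1)[OF B, of 0 1 2 1 0] is_minv_3_expand(1)[OF B, of 0 1 2 2 0]
    unfolding A_def by simp_all
  show ?thesis
    unfolding A_def[symmetric] Phi_def J2_def LambdaL_def B_def[symmetric]
    using Phi_ring_identity[OF units(1,2,5,8) entry_units relations] by simp
qed

lemma Phi_inv_mat3_11:
  fixes a b c d :: "'a::ring_1"
  assumes "in_hatS (mat3 1 1 1 1 a b 1 c d)"
  shows "Phi_inv (mat3 1 1 1 1 a b 1 c d) 1 1 =
    (d - 1) * uinv (d - c) * (d * uinv b - c * uinv a) * uinv (d * uinv b - 1)"
proof -
  define C where "C = J2 (mat3 1 1 1 1 a b 1 c d)"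
  define D where "D = minv 3 C"
  note units = in_hatS_mat3_units[OF assms]
  have C: "C 0 0 = 1" "C 0 1 = 1" "C 0 2 = 1" "C 1 0 = 1" "C 1 1 = uinv a" "C 1 2 = uinv c"
    "C 2 0 = 1" "C 2 1 = uinv b" "C 2 2 = uinv d"
    unfolding C_def J2_def by simp_all
  note C = C C[unfolded One_nat_def]
  have D: "is_minv 3 C D"
    using assms unfolding in_hatS_def in_S_def C_def D_def by (intro is_minv_minv) simp
  have "is_unit (uinv d - uinv c)" "is_unit (uinv d - uinv b)"
    using units by (simp_all add: is_unit_uinv_diff is_unit_diff_commute)
  then have entry_units: "is_unit (D 1 0)" "is_unit (D 0 1)"
    using is_minv_3_cofactor_unit[OF D, of 0 1 2 1 0 2] is_minv_3_cofactor_unit[OF D, of 1 0 2 0 1 2]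
    by (simp_all add: C)
  have relations: "D 1 0 + D 1 1 + D 1 2 = 0" "D 1 0 + D 1 1 * uinv c + D 1 2 * uinv d = 0"
    "D 0 0 + D 0 1 * uinv a + D 0 2 * uinv b = 0" "D 0 0 + D 0 1 * uinv c + D 0 2 * uinv d = 0"
    using is_minv_3_expand(2)[OF D, of 0 1 2 1 0] is_minv_3_expand(2)[OF D, of 0 1 2 1 2]
      is_minv_3_expand(2)[OF D, of 0 1 2 0 1] is_minv_3_expand(2)[OF D, of 0 1 2 0 2]
    by (simp_all add: C)
  show ?thesis
    unfolding Phi_inv_def LambdaR_def JJinv_def J1_def C_def[symmetric] D_def[symmetric]
    using Phi_inv_ring_identity[OF units(1-4,6,7) entry_units relations] by simp
qed

theorem lemma9:
  fixes a b c d :: "'a::ring_1"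
  assumes "in_hatS (mat3 1 1 1 1 a b 1 c d)"
  shows "Phi (mat3 1 1 1 1 a b 1 c d) 1 1 =
           uinv (d - 1) * (d - c) * uinv a * uinv (d * uinv b - c * uinv a) * (d * uinv b - 1)
         \<and> Phi_inv (mat3 1 1 1 1 a b 1 c d) 1 1 =
           (d - 1) * uinv (d - c) * (d * uinv b - c * uinv a) * uinv (d * uinv b - 1)"
  using Phi_mat3_11[OF assms] Phi_inv_mat3_11[OF assms] ..

end
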